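(* Consider an $N$-player quadratic game with step sizes $\gamma_1,\ldots,\gamma_N>0$, associated block matrix $W$, and disturbed gradient-based learning dynamics as described in the context, in which player $i$'s gradient is corrupted by an arbitrary disturbance. Then a player $j\neq i$ is disturbance decoupled from player $i$ if and only if $$\sum_{p\in\mathcal{P}^k_{ij}}\ \prod_{l=0}^{k-1}W_{v_{l+1},v_l}=0\quad\text{for all integers } 0<k<n,$$ where for each path $p=(i,v_1,\ldots,v_{k-1},j)\in\mathcal{P}^k_{ij}$ we set $v_0=i$, $v_k=j$, and the product denotes the ordered matrix product $W_{v_k,v_{k-1}}W_{v_{k-1},v_{k-2}}\cdots W_{v_1,v_0}$ (the path weight).
   Context: There are $N$ players, indexed by $[N]=\{1,\ldots,N\}$; player $\ell$ has action $x_\ell\in\mathbb{R}^{n_\ell}$, $n=\sum_{\ell=1}^N n_\ell$, and $x=(x_1,\ldots,x_N)\in\mathbb{R}^n$ is the joint action. A quadratic game has costs $f_\ell(x)=\tfrac12 x_\ell^\top P_\ell x_\ell + x_\ell^\top\big(\sum_{m\neq \ell}P_{\ell m}x_m + r_\ell\big)$ with $P_\ell\in\mathbb{R}^{n_\ell\times n_\ell}$ symmetric, $P_{\ell m}\in\mathbb{R}^{n_\ell\times n_m}$, $r_\ell\in\mathbb{R}^{n_\ell}$. Each player $\ell$ has step size $\gamma_\ell>0$ and updates $x_\ell^{k+1}=x_\ell^k-\gamma_\ell\big(D_\ell f_\ell(x^k)+d_\ell^k\big)$, where $D_\ell f_\ell=\partial f_\ell/\partial x_\ell$ and $d_\ell^k\in\mathbb{R}^{n_\ell}$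 is an arbitrary additive disturbance. Let $W\in\mathbb{R}^{n\times n}$ be the block matrix with blocks $W_{\ell\ell}=I_{n_\ell}-\gamma_\ell P_\ell$ and $W_{\ell m}=-\gamma_\ell P_{\ell m}$ ($\ell\neq m$), $\Gamma=\mathrm{blkdiag}(\gamma_1 I_{n_1},\ldots,\gamma_N I_{n_N})$, $\bar r=(r_1,\ldots,r_N)$. Let $\mathcal{D}_i=\{d\in\mathbb{R}^n : d_m=0\ \forall m\neq i\}$. The uncorrupted and corrupted dynamics are $x^{k+1}=Wx^k-\Gamma\bar r$ and $y^{k+1}=Wy^k-\Gamma\bar r-\Gamma d^k$. Player $j\neq i$ is disturbance decoupled from player $i$ if for every initial $x^0$, with $y^0=x^0$, one has $y_j^k=x_j^k$ for all $k\ge0$ and all disturbance sequences with $d^k\in\mathcal{D}_i$. Game graph: the directed graph on node set $[N]$ with an edge $(m,\ell)$ (from $m$ to $\ell$) of weight $W_{\ell m}\in\mathbb{R}^{n_\ell\times n_m}$ whenever $W_{\ell m}\neq0$, and with a self-loop $(\ell,\ell)$ of weight $W_{\ell\ell}$ at every node. A path $(i,v_1,\ldots,v_{k-1},j)$ is a sequence of $k+1$ nodes in which each consecutive pair is an edge (self-loops allowed); $\mathcal{P}^k_{ij}$ is the set of all such paths starting at $i$ and ending at $j$ with $k+1$ nodes. *)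

theory Defs
  imports "Jordan_Normal_Form.Matrix"
begin

text \<open>Players are indexed 0,...,N-1. Player l has action dimension nd l.
  Game data: P l (n_l x n_l, symmetric), Pc l m (n_l x n_m, l differs from m),
  r l (vector of dimension n_l), step sizes g l > 0.\<close>

definition Wblk :: "(nat \<Rightarrow> nat) \<Rightarrow> (nat \<Rightarrow> real) \<Rightarrow> (nat \<Rightarrow> real mat)
    \<Rightarrow> (nat \<Rightarrow> nat \<Rightarrow> real mat) \<Rightarrow> nat \<Rightarrow> nat \<Rightarrow> real mat" where
  "Wblk nd g P Pc l m =
     (if l = m then 1\<^sub>m (nd l) - g l \<cdot>\<^sub>m P l else (- g l) \<cdot>\<^sub>m Pc l m)"

text \<open>Block form of W x - Gamma rbar - Gamma d (player-wise).\<close>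
fun traj :: "nat \<Rightarrow> (nat \<Rightarrow> nat) \<Rightarrow> (nat \<Rightarrow> real) \<Rightarrow> (nat \<Rightarrow> nat \<Rightarrow> real mat)
    \<Rightarrow> (nat \<Rightarrow> real vec) \<Rightarrow> (nat \<Rightarrow> real vec) \<Rightarrow> (nat \<Rightarrow> nat \<Rightarrow> real vec)
    \<Rightarrow> nat \<Rightarrow> nat \<Rightarrow> real vec" where
  "traj N nd g W r x0 d 0 = x0"
| "traj N nd g W r x0 d (Suc k) =
     (\<lambda>l. vec (nd l) (\<lambda>a.
        (\<Sum>m<N. \<Sum>b<nd m. W l m $$ (a, b) * (traj N nd g W r x0 d k m) $ b)
        - g l * (r l $ a) - g l * (d k l $ a)))"

definition dist_decoupled :: "nat \<Rightarrow> (nat \<Rightarrow> nat) \<Rightarrow> (nat \<Rightarrow> real) \<Rightarrow> (nat \<Rightarrow> nat \<Rightarrow> real mat)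
    \<Rightarrow> (nat \<Rightarrow> real vec) \<Rightarrow> nat \<Rightarrow> nat \<Rightarrow> bool" where
  "dist_decoupled N nd g W r i j \<longleftrightarrow>
     (\<forall>x0 d. (\<forall>l<N. x0 l \<in> carrier_vec (nd l))
        \<longrightarrow> (\<forall>k l. l < N \<longrightarrow> d k l \<in> carrier_vec (nd l))
        \<longrightarrow> (\<forall>k m. m < N \<longrightarrow> m \<noteq> i \<longrightarrow> d k m = 0\<^sub>v (nd m))
        \<longrightarrow> (\<forall>k. traj N nd g W r x0 d k j
                  = traj N nd g W r x0 (\<lambda>k l. 0\<^sub>v (nd l)) k j))"

definition gedge :: "(nat \<Rightarrow> nat) \<Rightarrow> (nat \<Rightarrow> nat \<Rightarrow> real mat) \<Rightarrow> nat \<Rightarrow> nat \<Rightarrow> bool" where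
  "gedge nd W m l \<longleftrightarrow> l = m \<or> W l m \<noteq> 0\<^sub>m (nd l) (nd m)"

definition paths :: "nat \<Rightarrow> (nat \<Rightarrow> nat) \<Rightarrow> (nat \<Rightarrow> nat \<Rightarrow> real mat) \<Rightarrow> nat \<Rightarrow> nat \<Rightarrow> nat
    \<Rightarrow> nat list set" where
  "paths N nd W k i j = {p. length p = Suc k \<and> set p \<subseteq> {..<N} \<and> p ! 0 = i \<and> p ! k = j
       \<and> (\<forall>t<k. gedge nd W (p ! t) (p ! Suc t))}"

fun pweight :: "(nat \<Rightarrow> nat) \<Rightarrow> (nat \<Rightarrow> nat \<Rightarrow> real mat) \<Rightarrow> nat list \<Rightarrow> real mat" where
  "pweight nd W [] = 1\<^sub>m 0"
| "pweight nd W [v] = 1\<^sub>m (nd v)"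
| "pweight nd W (v # w # rest) = pweight nd W (w # rest) * W w v"

definition path_sum :: "nat \<Rightarrow> (nat \<Rightarrow> nat) \<Rightarrow> (nat \<Rightarrow> nat \<Rightarrow> real mat) \<Rightarrow> nat \<Rightarrow> nat \<Rightarrow> nat
    \<Rightarrow> real mat" where
  "path_sum N nd W k i j =
     mat (nd j) (nd i) (\<lambda>(a, b). \<Sum>p\<in>paths N nd W k i j. pweight nd W p $$ (a, b))"

end

theory Submission
  imports Defs "HOL-Library.Function_Algebras" "HOL-Library.Indicator_Function"
begin

(* Stack the players' actions into one vector of R^n.  The deviation e^k = y^k - x^k caused by
   the disturbance obeys e^0 = 0 and e^(k+1) = W e^k - Gamma d^k, hence
   e^k = - (sum over t < k of W^(k-1-t) Gamma d^t).  As d^t only acts on player i's coordinates,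
   player j is decoupled iff the (j,i) block of every power W^t vanishes; a unit impulse at
   time 0 shows necessity.  Expanding the matrix product, the (j,i) block of W^t is the sum of
   the weights of the paths with t + 1 nodes from i to j, which is 0 for t = 0 since j <> i.
   Finally, in place of Cayley-Hamilton, the Krylov vectors W^t e lie in the span of the first
   n of them, so the blocks for t < n already control all powers. *)

instantiation "fun" :: (type, real_vector) real_vector
begin

definition scaleR_fun :: "real \<Rightarrow> ('a \<Rightarrow> 'b) \<Rightarrow> 'a \<Rightarrow> 'b" where
  "scaleR_fun c f = (\<lambda>x. c *\<^sub>R f x)"

instance
  by standard (simp_all add: scaleR_fun_def fun_eq_iff scaleR_add_right scaleR_add_left)

end

lemma scaleR_fun_apply [simp]: "(c *\<^sub>R f) x = c *\<^sub>R f x"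
  by (simp add: scaleR_fun_def)

lemma sum_fun_apply: "(\<Sum>i\<in>A. f i) x = (\<Sum>i\<in>A. f i x)"
  by (induction A rule: infinite_finite_induct) auto

lemma sum_indicators_eq:
  fixes x :: "'a \<Rightarrow> real"
  assumes "finite I" and "\<And>q. q \<notin> I \<Longrightarrow> x q = 0"
  shows "(\<Sum>q\<in>I. x q *\<^sub>R indicator {q}) = x"
proof
  fix p
  show "(\<Sum>q\<in>I. x q *\<^sub>R indicator {q}) p = x p"
    using assms by (cases "p \<in> I") (auto simp: sum_fun_apply indicator_def)
qed

lemma in_span_indicators:
  fixes x :: "'a \<Rightarrow> real"
  assumes "finite I" and "\<And>q. q \<notin> I \<Longrightarrow> x q = 0"
  shows "x \<in> span ((\<lambda>q. indicator {q}) ` I)"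
proof -
  have "(\<Sum>q\<in>I. x q *\<^sub>R indicator {q}) \<in> span ((\<lambda>q. indicator {q} :: 'a \<Rightarrow> real) ` I)"
    by (intro span_sum span_scale span_base) auto
  then show ?thesis
    using sum_indicators_eq[OF assms] by simp
qed

section \<open>Iterates of a linear map\<close>

lemma linear_funpow:
  fixes f :: "'a::real_vector \<Rightarrow> 'a"
  assumes "linear f"
  shows "linear (f ^^ n)"
  by (induction n) (simp_all add: linear_ident assms Real_Vector_Spaces.linear_compose[unfolded comp_def])

lemma linear_recurrence_solution:
  fixes f :: "'a::real_vector \<Rightarrow> 'a"
  assumes f: "linear f" and x0: "x 0 = 0" and step: "\<And>k. x (Suc k) = f (x k) + u k"
  shows "x k = (\<Sum>t<k. (f ^^ (k - Suc t)) (u t))"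
proof (induction k)
  case 0
  show ?case by (simp add: x0)
next
  case (Suc k)
  have shift: "f ((f ^^ (k - Suc t)) y) = (f ^^ (Suc k - Suc t)) y" if "t < k" for t y
    using that by (metis Suc_diff_Suc comp_apply diff_Suc_Suc funpow.simps(2))
  have "x (Suc k) = (\<Sum>t<k. f ((f ^^ (k - Suc t)) (u t))) + u k"
    by (simp add: step Suc linear_sum[OF f])
  also have "\<dots> = (\<Sum>t<k. (f ^^ (Suc k - Suc t)) (u t)) + (f ^^ (Suc k - Suc k)) (u k)"
    by (simp add: shift)
  finally show ?case by simp
qed

lemma exists_iterate_in_span_predecessors:
  assumes B: "finite B" "card B \<le> n" and iterates: "\<And>k. (f ^^ k) s \<in> span B"
  shows "\<exists>m\<le>n. (f ^^ m) s \<in> span ((\<lambda>k. (f ^^ k) s) ` {..<m})"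
proof (rule ccontr)
  define K where "K m = (\<lambda>k. (f ^^ k) s) ` {..<m}" for m
  assume "\<not> ?thesis"
  then have fresh: "(f ^^ m) s \<notin> span (K m)" if "m \<le> n" for m
    using that by (auto simp: K_def)
  have indep: "independent (K m) \<and> card (K m) = m" if "m \<le> Suc n" for m
    using that
  proof (induction m)
    case 0
    then show ?case by (simp add: K_def independent_empty)
  next
    case (Suc m)
    have "K (Suc m) = insert ((f ^^ m) s) (K m)"
      by (simp add: K_def lessThan_Suc)
    moreover have new: "(f ^^ m) s \<notin> span (K m)"
      using fresh Suc.prems by simp
    moreover have "(f ^^ m) s \<notin> K m"
      using new span_base by blast
    moreover have "finite (K m)"
      by (simp add: K_def)
    ultimately show ?case
      using Suc by (simp add: independent_insert)
  qed
  have "K (Suc n) \<subseteq> span B"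
    using iterates by (auto simp: K_def)
  then have "card (K (Suc n)) \<le> card B"
    using independent_span_bound[OF B(1)] indep[of "Suc n"] by blast
  with indep[of "Suc n"] B(2) show False
    by simp
qed

lemma funpow_in_span_first_iterates:
  fixes f :: "'a::real_vector \<Rightarrow> 'a"
  assumes f: "linear f" and m: "(f ^^ m) s \<in> span ((\<lambda>k. (f ^^ k) s) ` {..<m})"
  shows "(f ^^ t) s \<in> span ((\<lambda>k. (f ^^ k) s) ` {..<m})"
proof -
  define K where "K = (\<lambda>k. (f ^^ k) s) ` {..<m}"
  have "f ` K \<subseteq> span K"
  proof
    fix y
    assume "y \<in> f ` K"
    then obtain k where k: "k < m" "y = (f ^^ Suc k) s"
      by (auto simp: K_def)
    show "y \<in> span K"
    proof (cases "Suc k = m")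
      case True
      with k m show ?thesis by (simp add: K_def)
    next
      case False
      with k have "y \<in> K"
        unfolding K_def by (intro image_eqI[of _ _ "Suc k"]) auto
      then show ?thesis by (rule span_base)
    qed
  qed
  then have K_invariant: "f ` span K \<subseteq> span K"
    by (simp add: span_linear_image[OF f, symmetric] span_minimal)
  have s: "s \<in> span K"
  proof (cases m)
    case 0
    with m show ?thesis by (simp add: K_def)
  next
    case (Suc m')
    then have "(f ^^ 0) s \<in> K"
      unfolding K_def by (intro image_eqI[of _ _ 0]) auto
    then show ?thesis by (simp add: span_base)
  qed
  show ?thesis
    unfolding K_def[symmetric]
  proof (induction t)
    case 0
    from s show ?case by simp
  next
    case (Suc t)
    with K_invariant show ?case by auto
  qed
qed

lemma funpow_in_span_Krylov:
  fixes f :: "'a::real_vector \<Rightarrow> 'a"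
  assumes f: "linear f" and B: "finite B" "card B \<le> n"
    and invariant: "f ` span B \<subseteq> span B" and s: "s \<in> span B"
  shows "(f ^^ t) s \<in> span ((\<lambda>k. (f ^^ k) s) ` {..<n})"
proof -
  have "(f ^^ k) s \<in> span B" for k
    by (induction k) (use s invariant in auto)
  from exists_iterate_in_span_predecessors[OF B this]
  obtain m where m: "m \<le> n" and dependent: "(f ^^ m) s \<in> span ((\<lambda>k. (f ^^ k) s) ` {..<m})"
    by blast
  have "(f ^^ t) s \<in> span ((\<lambda>k. (f ^^ k) s) ` {..<m})"
    by (rule funpow_in_span_first_iterates[OF f dependent])
  moreover have "span ((\<lambda>k. (f ^^ k) s) ` {..<m}) \<subseteq> span ((\<lambda>k. (f ^^ k) s) ` {..<n})"
    using m by (intro span_mono) auto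
  ultimately show ?thesis
    by blast
qed

section \<open>Block vectors and powers of W\<close>

(* A block vector (x_0, ..., x_(N-1)) is encoded by the function (l, a) |-> x_l $ a on
   blk_idx N nd and 0 elsewhere; in this encoding blk_op N nd W is multiplication by W, and the
   indicator of (l, a) is the standard basis vector of coordinate a of player l. *)

definition blk_idx :: "nat \<Rightarrow> (nat \<Rightarrow> nat) \<Rightarrow> (nat \<times> nat) set" where
  "blk_idx N nd = (SIGMA l:{..<N}. {..<nd l})"

definition stack :: "nat \<Rightarrow> (nat \<Rightarrow> nat) \<Rightarrow> (nat \<Rightarrow> real vec) \<Rightarrow> nat \<times> nat \<Rightarrow> real" where
  "stack N nd x = (\<lambda>(l, a). if (l, a) \<in> blk_idx N nd then x l $ a else 0)"

definition blk_op :: "nat \<Rightarrow> (nat \<Rightarrow> nat) \<Rightarrow> (nat \<Rightarrow> nat \<Rightarrow> real mat)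
    \<Rightarrow> (nat \<times> nat \<Rightarrow> real) \<Rightarrow> nat \<times> nat \<Rightarrow> real" where
  "blk_op N nd W x = (\<lambda>(l, a). if (l, a) \<in> blk_idx N nd
     then \<Sum>(m, b)\<in>blk_idx N nd. W l m $$ (a, b) * x (m, b) else 0)"

lemma finite_blk_idx [simp]: "finite (blk_idx N nd)"
  by (simp add: blk_idx_def)

lemma card_blk_idx: "card (blk_idx N nd) = (\<Sum>l<N. nd l)"
  by (simp add: blk_idx_def)

lemma linear_blk_op: "linear (blk_op N nd W)"
  by (rule linearI)
    (auto simp: blk_op_def fun_eq_iff sum.distrib sum_distrib_left algebra_simps split_def)

lemma blk_op_outside: "q \<notin> blk_idx N nd \<Longrightarrow> blk_op N nd W x q = 0"
  by (auto simp: blk_op_def split: prod.splits)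

lemma blk_op_indicator:
  assumes "(i, b) \<in> blk_idx N nd"
  shows "blk_op N nd W (indicator {(i, b)})
    = (\<Sum>(v, c)\<in>blk_idx N nd. W v i $$ (c, b) *\<^sub>R indicator {(v, c)})"
proof -
  have "blk_op N nd W (indicator {(i, b)})
      = (\<Sum>q\<in>blk_idx N nd. blk_op N nd W (indicator {(i, b)}) q *\<^sub>R indicator {q})"
    by (rule sum_indicators_eq[symmetric]) (simp_all add: blk_op_outside)
  also have "\<dots> = (\<Sum>(v, c)\<in>blk_idx N nd. W v i $$ (c, b) *\<^sub>R indicator {(v, c)})"
    using assms by (intro sum.cong refl) (auto simp: blk_op_def split_def)
  finally show ?thesis .
qed

lemma funpow_blk_op_Suc_indicator:
  assumes "(i, b) \<in> blk_idx N nd"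
  shows "(blk_op N nd W ^^ Suc k) (indicator {(i, b)})
    = (\<Sum>(v, c)\<in>blk_idx N nd. W v i $$ (c, b) *\<^sub>R (blk_op N nd W ^^ k) (indicator {(v, c)}))"
proof -
  have "(blk_op N nd W ^^ Suc k) (indicator {(i, b)})
      = (blk_op N nd W ^^ k) (blk_op N nd W (indicator {(i, b)}))"
    by (simp only: funpow_Suc_right o_apply)
  then show ?thesis
    using linear_funpow[OF linear_blk_op]
    by (simp add: blk_op_indicator[OF assms] linear_sum linear_scale split_def)
qed

lemma funpow_blk_op_vanishes_Krylov:
  assumes s: "\<And>q. q \<notin> blk_idx N nd \<Longrightarrow> s q = 0"
    and first: "\<And>k. k < (\<Sum>l<N. nd l) \<Longrightarrow> (blk_op N nd W ^^ k) s p = 0"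
  shows "(blk_op N nd W ^^ t) s p = 0"
proof -
  let ?B = "(\<lambda>q. indicator {q}) ` blk_idx N nd :: (nat \<times> nat \<Rightarrow> real) set"
  have "card ?B \<le> (\<Sum>l<N. nd l)"
    using card_image_le[OF finite_blk_idx] by (simp add: card_blk_idx)
  moreover have "blk_op N nd W ` span ?B \<subseteq> span ?B"
    by (auto intro: in_span_indicators blk_op_outside)
  moreover have "s \<in> span ?B"
    using s by (simp add: in_span_indicators)
  ultimately have Krylov:
    "(blk_op N nd W ^^ t) s \<in> span ((\<lambda>k. (blk_op N nd W ^^ k) s) ` {..<\<Sum>l<N. nd l})"
    by (intro funpow_in_span_Krylov[OF linear_blk_op]) simp_all
  have "linear (\<lambda>x :: nat \<times> nat \<Rightarrow> real. x p)"
    by (rule linearI) simp_all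
  then show ?thesis
    by (rule linear_eq_0_on_span[OF _ _ Krylov]) (auto intro: first)
qed

section \<open>Path sums\<close>

lemma finite_paths: "finite (paths N nd W k i j)"
proof (rule finite_subset)
  show "paths N nd W k i j \<subseteq> {p. set p \<subseteq> {..<N} \<and> length p = Suc k}"
    by (auto simp: paths_def)
qed (rule finite_lists_length_eq, simp)

lemma paths_0: "paths N nd W 0 i j = (if i = j \<and> i < N then {[i]} else {})"
  by (auto simp: paths_def length_Suc_conv)

lemma Cons_in_paths_Suc:
  "i # q \<in> paths N nd W (Suc k) i' j \<longleftrightarrow>
     i = i' \<and> i < N \<and> q \<noteq> [] \<and> gedge nd W i (hd q) \<and> q \<in> paths N nd W k (hd q) j"
  by (cases q) (auto simp: paths_def less_Suc_eq_0_disj)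

lemma paths_Suc:
  assumes "i < N"
  shows "paths N nd W (Suc k) i j
    = (\<Union>v\<in>{v. v < N \<and> gedge nd W i v}. (#) i ` paths N nd W k v j)"
proof (intro equalityI subsetI)
  fix p
  assume p: "p \<in> paths N nd W (Suc k) i j"
  then obtain q where "p = i # q"
    by (cases p) (auto simp: paths_def)
  moreover from p this have q: "q \<noteq> []" "gedge nd W i (hd q)" "q \<in> paths N nd W k (hd q) j"
    by (simp_all add: Cons_in_paths_Suc)
  moreover have "hd q < N"
    using q(3) hd_in_set[OF q(1)] unfolding paths_def by blast
  ultimately show "p \<in> (\<Union>v\<in>{v. v < N \<and> gedge nd W i v}. (#) i ` paths N nd W k v j)"
    by blast
next
  fix p
  assume "p \<in> (\<Union>v\<in>{v. v < N \<and> gedge nd W i v}. (#) i ` paths N nd W k v j)"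
  then obtain v q where "gedge nd W i v" and q: "q \<in> paths N nd W k v j" and "p = i # q"
    by blast
  moreover have "q \<noteq> []" and "hd q = v"
    using q by (cases q, auto simp: paths_def)+
  ultimately show "p \<in> paths N nd W (Suc k) i j"
    using assms by (simp add: Cons_in_paths_Suc)
qed

lemma sum_paths_Suc:
  assumes "i < N"
  shows "(\<Sum>p\<in>paths N nd W (Suc k) i j. f p)
    = (\<Sum>v\<in>{v. v < N \<and> gedge nd W i v}. \<Sum>q\<in>paths N nd W k v j. f (i # q))"
proof -
  have "(\<Sum>p\<in>paths N nd W (Suc k) i j. f p)
    = (\<Sum>v\<in>{v. v < N \<and> gedge nd W i v}. \<Sum>p\<in>(#) i ` paths N nd W k v j. f p)"
    unfolding paths_Suc[OF assms]
    by (rule sum.UNION_disjoint) (simp_all add: finite_paths, auto simp: paths_def)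
  then show ?thesis
    by (simp add: sum.reindex)
qed

lemma index_mult_mat_sum:
  assumes "A \<in> carrier_mat n m" "B \<in> carrier_mat m q" "a < n" "b < q"
  shows "(A * B) $$ (a, b) = (\<Sum>c<m. A $$ (a, c) * B $$ (c, b))"
  using assms by (simp add: scalar_prod_def atLeast0LessThan)

lemma carrier_pweight:
  assumes "p \<noteq> []" "set p \<subseteq> {..<N}"
    and "\<And>l m. l < N \<Longrightarrow> m < N \<Longrightarrow> W l m \<in> carrier_mat (nd l) (nd m)"
  shows "pweight nd W p \<in> carrier_mat (nd (last p)) (nd (hd p))"
  using assms by (induction nd W p rule: pweight.induct) auto

lemma pweight_Cons_entry:
  assumes W: "\<And>l m. l < N \<Longrightarrow> m < N \<Longrightarrow> W l m \<in> carrier_mat (nd l) (nd m)"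
    and i: "i < N" and v: "v < N" and q: "q \<in> paths N nd W k v j" and a: "a < nd j" and b: "b < nd i"
  shows "pweight nd W (i # q) $$ (a, b) = (\<Sum>c<nd v. pweight nd W q $$ (a, c) * W v i $$ (c, b))"
proof -
  obtain rest where q_Cons: "q = v # rest"
    using q by (cases q) (auto simp: paths_def)
  moreover have "last q = j" and "set q \<subseteq> {..<N}"
    using q q_Cons by (auto simp: paths_def last_conv_nth)
  then have "pweight nd W q \<in> carrier_mat (nd j) (nd v)"
    using carrier_pweight[of q N W nd] W q_Cons by simp
  moreover have "W v i \<in> carrier_mat (nd v) (nd i)"
    using W v i by simp
  moreover have "pweight nd W (i # q) = pweight nd W q * W v i"
    using q_Cons by simp
  ultimately show ?thesis
    using index_mult_mat_sum a b by (simp only:)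
qed

lemma sum_pweight_Suc:
  assumes W: "\<And>l m. l < N \<Longrightarrow> m < N \<Longrightarrow> W l m \<in> carrier_mat (nd l) (nd m)"
    and i: "i < N" and a: "a < nd j" and b: "b < nd i"
  shows "(\<Sum>p\<in>paths N nd W (Suc k) i j. pweight nd W p $$ (a, b))
    = (\<Sum>(v, c)\<in>blk_idx N nd. (\<Sum>q\<in>paths N nd W k v j. pweight nd W q $$ (a, c)) * W v i $$ (c, b))"
proof -
  let ?V = "{v. v < N \<and> gedge nd W i v}"
  have "(\<Sum>p\<in>paths N nd W (Suc k) i j. pweight nd W p $$ (a, b))
      = (\<Sum>v\<in>?V. \<Sum>q\<in>paths N nd W k v j. \<Sum>c<nd v. pweight nd W q $$ (a, c) * W v i $$ (c, b))"
    unfolding sum_paths_Suc[OF i]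
    by (intro sum.cong refl) (simp add: pweight_Cons_entry[OF W i _ _ a b])
  also have "\<dots> = (\<Sum>v\<in>?V. \<Sum>c<nd v. (\<Sum>q\<in>paths N nd W k v j. pweight nd W q $$ (a, c)) * W v i $$ (c, b))"
    by (simp add: sum.swap[of _ "paths N nd W k _ j"] sum_distrib_right)
  also have "\<dots> = (\<Sum>v<N. \<Sum>c<nd v. (\<Sum>q\<in>paths N nd W k v j. pweight nd W q $$ (a, c)) * W v i $$ (c, b))"
    using b by (intro sum.mono_neutral_left) (auto simp: gedge_def)
  also have "\<dots> = (\<Sum>(v, c)\<in>blk_idx N nd. (\<Sum>q\<in>paths N nd W k v j. pweight nd W q $$ (a, c)) * W v i $$ (c, b))"
    by (simp add: blk_idx_def sum.Sigma)
  finally show ?thesis .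
qed

lemma path_sum_entry:
  assumes W: "\<And>l m. l < N \<Longrightarrow> m < N \<Longrightarrow> W l m \<in> carrier_mat (nd l) (nd m)"
    and "i < N" "j < N" "a < nd j" "b < nd i"
  shows "path_sum N nd W k i j $$ (a, b) = (blk_op N nd W ^^ k) (indicator {(i, b)}) (j, a)"
proof -
  have "(\<Sum>p\<in>paths N nd W k i j. pweight nd W p $$ (a, b))
      = (blk_op N nd W ^^ k) (indicator {(i, b)}) (j, a)"
    using assms(2,5)
  proof (induction k arbitrary: i b)
    case 0
    then show ?case
      using assms(3,4) by (auto simp: paths_0 indicator_def)
  next
    case (Suc k)
    have "(\<Sum>p\<in>paths N nd W (Suc k) i j. pweight nd W p $$ (a, b))
        = (\<Sum>(v, c)\<in>blk_idx N nd. (\<Sum>q\<in>paths N nd W k v j. pweight nd W q $$ (a, c)) * W v i $$ (c, b))"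
      by (rule sum_pweight_Suc[OF W Suc.prems(1) assms(4) Suc.prems(2)])
    also have "\<dots> = (\<Sum>(v, c)\<in>blk_idx N nd. (blk_op N nd W ^^ k) (indicator {(v, c)}) (j, a) * W v i $$ (c, b))"
      using Suc.IH by (intro sum.cong refl) (auto simp: blk_idx_def)
    also have "\<dots> = (\<Sum>(v, c)\<in>blk_idx N nd. W v i $$ (c, b) *\<^sub>R (blk_op N nd W ^^ k) (indicator {(v, c)})) (j, a)"
      by (simp add: sum_fun_apply split_def mult.commute)
    also have "\<dots> = (blk_op N nd W ^^ Suc k) (indicator {(i, b)}) (j, a)"
      using Suc.prems by (simp only: funpow_blk_op_Suc_indicator blk_idx_def mem_Sigma_iff lessThan_iff)
    finally show ?case .
  qed
  then show ?thesis
    using assms by (simp add: path_sum_def)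
qed

section \<open>Propagation of the disturbance\<close>

lemma stack_traj_Suc:
  "stack N nd (traj N nd g W r x0 d (Suc k))
     = blk_op N nd W (stack N nd (traj N nd g W r x0 d k))
       - (\<lambda>q. g (fst q) * (stack N nd r q + stack N nd (d k) q))"
proof
  fix q :: "nat \<times> nat"
  obtain l a where q: "q = (l, a)" by fastforce
  have "(\<Sum>m<N. \<Sum>b<nd m. W l m $$ (a, b) * traj N nd g W r x0 d k m $ b)
      = (\<Sum>(m, b)\<in>blk_idx N nd. W l m $$ (a, b) * stack N nd (traj N nd g W r x0 d k) (m, b))"
    by (simp add: blk_idx_def stack_def sum.Sigma[symmetric])
  then show "stack N nd (traj N nd g W r x0 d (Suc k)) q
    = (blk_op N nd W (stack N nd (traj N nd g W r x0 d k))
       - (\<lambda>q. g (fst q) * (stack N nd r q + stack N nd (d k) q))) q"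
    by (auto simp: q stack_def blk_op_def blk_idx_def algebra_simps)
qed

lemma stack_traj_deviation:
  "stack N nd (traj N nd g W r x0 d k) - stack N nd (traj N nd g W r x0 (\<lambda>k l. 0\<^sub>v (nd l)) k)
    = - (\<Sum>t<k. (blk_op N nd W ^^ (k - Suc t)) (\<lambda>q. g (fst q) * stack N nd (d t) q))"
proof -
  have zero: "stack N nd (\<lambda>l. 0\<^sub>v (nd l)) = 0"
    by (auto simp: stack_def blk_idx_def zero_fun_def)
  have "stack N nd (traj N nd g W r x0 d k) - stack N nd (traj N nd g W r x0 (\<lambda>k l. 0\<^sub>v (nd l)) k)
    = (\<Sum>t<k. (blk_op N nd W ^^ (k - Suc t)) (- (\<lambda>q. g (fst q) * stack N nd (d t) q)))"
  proof (rule linear_recurrence_solution[OF linear_blk_op])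
    fix k
    show "stack N nd (traj N nd g W r x0 d (Suc k))
        - stack N nd (traj N nd g W r x0 (\<lambda>k l. 0\<^sub>v (nd l)) (Suc k))
      = blk_op N nd W (stack N nd (traj N nd g W r x0 d k)
        - stack N nd (traj N nd g W r x0 (\<lambda>k l. 0\<^sub>v (nd l)) k))
        + - (\<lambda>q. g (fst q) * stack N nd (d k) q)"
      unfolding stack_traj_Suc linear_diff[OF linear_blk_op] zero
      by (simp add: fun_eq_iff algebra_simps)
  qed (simp add: zero_fun_def)
  then show ?thesis
    by (simp add: linear_neg[OF linear_funpow[OF linear_blk_op]] sum_negf)
qed

lemma scaled_stack_single_player:
  assumes "i < N" and "\<And>m. m < N \<Longrightarrow> m \<noteq> i \<Longrightarrow> v m = 0\<^sub>v (nd m)"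
  shows "(\<lambda>q. g (fst q) * stack N nd v q) = (\<Sum>b<nd i. (g i * v i $ b) *\<^sub>R indicator {(i, b)})"
proof
  fix q :: "nat \<times> nat"
  obtain l c where q: "q = (l, c)" by fastforce
  show "g (fst q) * stack N nd v q = (\<Sum>b<nd i. (g i * v i $ b) *\<^sub>R indicator {(i, b)}) q"
    using assms by (cases "l = i") (auto simp: q stack_def blk_idx_def sum_fun_apply indicator_def)
qed

lemma stack_traj_deviation_single_player:
  assumes i: "i < N" and d: "\<And>t m. m < N \<Longrightarrow> m \<noteq> i \<Longrightarrow> d t m = 0\<^sub>v (nd m)"
  shows "stack N nd (traj N nd g W r x0 d k) q - stack N nd (traj N nd g W r x0 (\<lambda>k l. 0\<^sub>v (nd l)) k) q
    = - (\<Sum>t<k. \<Sum>b<nd i. g i * d t i $ b * (blk_op N nd W ^^ (k - Suc t)) (indicator {(i, b)}) q)"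
proof -
  have "(blk_op N nd W ^^ n) (\<lambda>q. g (fst q) * stack N nd (d t) q) q
      = (\<Sum>b<nd i. g i * d t i $ b * (blk_op N nd W ^^ n) (indicator {(i, b)}) q)" for n t
    using scaled_stack_single_player[where v = "d t" and g = g, OF i d] linear_funpow[OF linear_blk_op]
    by (simp add: linear_sum linear_scale sum_fun_apply)
  then show ?thesis
    using fun_cong[OF stack_traj_deviation, where x = q] by (simp add: sum_fun_apply)
qed

definition unit_impulse :: "(nat \<Rightarrow> nat) \<Rightarrow> nat \<Rightarrow> nat \<Rightarrow> nat \<Rightarrow> nat \<Rightarrow> real vec" where
  "unit_impulse nd i b = (\<lambda>s l. if s = 0 \<and> l = i then unit_vec (nd i) b else 0\<^sub>v (nd l))"

lemma stack_traj_deviation_impulse: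
  assumes "i < N" "b < nd i"
  shows "stack N nd (traj N nd g W r x0 (unit_impulse nd i b) (Suc t)) q
      - stack N nd (traj N nd g W r x0 (\<lambda>k l. 0\<^sub>v (nd l)) (Suc t)) q
    = - (g i * (blk_op N nd W ^^ t) (indicator {(i, b)}) q)"
proof -
  have "stack N nd (traj N nd g W r x0 (unit_impulse nd i b) (Suc t)) q
      - stack N nd (traj N nd g W r x0 (\<lambda>k l. 0\<^sub>v (nd l)) (Suc t)) q
    = - (\<Sum>s<Suc t. \<Sum>b'<nd i. g i * unit_impulse nd i b s i $ b'
          * (blk_op N nd W ^^ (Suc t - Suc s)) (indicator {(i, b')}) q)"
    using assms by (intro stack_traj_deviation_single_player) (auto simp: unit_impulse_def)
  also have "\<dots> = - (\<Sum>b'<nd i. g i * unit_vec (nd i) b $ b' * (blk_op N nd W ^^ t) (indicator {(i, b')}) q)"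
    by (simp only: sum.lessThan_Suc_shift) (simp add: unit_impulse_def)
  also have "\<dots> = - (\<Sum>b'<nd i. if b' = b then g i * (blk_op N nd W ^^ t) (indicator {(i, b)}) q else 0)"
    using assms by (intro arg_cong[where f = uminus] sum.cong refl) simp_all
  also have "\<dots> = - (g i * (blk_op N nd W ^^ t) (indicator {(i, b)}) q)"
    using assms by simp
  finally show ?thesis .
qed

lemma traj_eq_iff_stack_eq:
  assumes "j < N"
  shows "traj N nd g W r x0 d k j = traj N nd g W r x0 d' k j \<longleftrightarrow>
    (\<forall>a<nd j. stack N nd (traj N nd g W r x0 d k) (j, a) = stack N nd (traj N nd g W r x0 d' k) (j, a))"
  using assms by (cases k) (auto simp: stack_def blk_idx_def vec_eq_iff)

lemma dist_decoupled_iff_impulse_response: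
  assumes i: "i < N" and j: "j < N" and g: "g i > 0"
  shows "dist_decoupled N nd g W r i j \<longleftrightarrow>
    (\<forall>t a b. a < nd j \<longrightarrow> b < nd i \<longrightarrow> (blk_op N nd W ^^ t) (indicator {(i, b)}) (j, a) = 0)"
    (is "_ \<longleftrightarrow> (\<forall>t a b. _ \<longrightarrow> _ \<longrightarrow> ?h t b a = 0)")
proof
  assume decoupled: "dist_decoupled N nd g W r i j"
  show "\<forall>t a b. a < nd j \<longrightarrow> b < nd i \<longrightarrow> ?h t b a = 0"
  proof (intro allI impI)
    fix t a b
    assume a: "a < nd j" and b: "b < nd i"
    define x0 where "x0 = (\<lambda>l. 0\<^sub>v (nd l) :: real vec)"
    have "\<forall>l<N. x0 l \<in> carrier_vec (nd l)"
      and "\<forall>k l. l < N \<longrightarrow> unit_impulse nd i b k l \<in> carrier_vec (nd l)"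
      and "\<forall>k m. m < N \<longrightarrow> m \<noteq> i \<longrightarrow> unit_impulse nd i b k m = 0\<^sub>v (nd m)"
      by (simp_all add: x0_def unit_impulse_def)
    then have "traj N nd g W r x0 (unit_impulse nd i b) (Suc t) j
        = traj N nd g W r x0 (\<lambda>k l. 0\<^sub>v (nd l)) (Suc t) j"
      using decoupled unfolding dist_decoupled_def by blast
    then have "stack N nd (traj N nd g W r x0 (unit_impulse nd i b) (Suc t)) (j, a)
        - stack N nd (traj N nd g W r x0 (\<lambda>k l. 0\<^sub>v (nd l)) (Suc t)) (j, a) = 0"
      using traj_eq_iff_stack_eq[OF j] a by (simp del: traj.simps)
    then show "?h t b a = 0"
      using stack_traj_deviation_impulse[where nd = nd, OF i b] g by (simp del: traj.simps)
  qed
next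
  assume response: "\<forall>t a b. a < nd j \<longrightarrow> b < nd i \<longrightarrow> ?h t b a = 0"
  show "dist_decoupled N nd g W r i j"
    unfolding dist_decoupled_def
  proof (intro allI impI)
    fix x0 :: "nat \<Rightarrow> real vec" and d :: "nat \<Rightarrow> nat \<Rightarrow> real vec" and k :: nat
    assume "\<forall>k m. m < N \<longrightarrow> m \<noteq> i \<longrightarrow> d k m = 0\<^sub>v (nd m)"
    then have d: "\<And>t m. m < N \<Longrightarrow> m \<noteq> i \<Longrightarrow> d t m = 0\<^sub>v (nd m)"
      by blast
    have "stack N nd (traj N nd g W r x0 d k) (j, a)
        - stack N nd (traj N nd g W r x0 (\<lambda>k l. 0\<^sub>v (nd l)) k) (j, a) = 0"
      if "a < nd j" for a
      using stack_traj_deviation_single_player[where nd = nd and d = d and q = "(j, a)", OF i d]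
        response that by simp
    then show "traj N nd g W r x0 d k j = traj N nd g W r x0 (\<lambda>k l. 0\<^sub>v (nd l)) k j"
      using traj_eq_iff_stack_eq[OF j] by simp
  qed
qed

lemma impulse_response_vanishes_iff_path_sums:
  assumes W: "\<And>l m. l < N \<Longrightarrow> m < N \<Longrightarrow> W l m \<in> carrier_mat (nd l) (nd m)"
    and i: "i < N" and j: "j < N" and ji: "j \<noteq> i"
  shows "(\<forall>t a b. a < nd j \<longrightarrow> b < nd i \<longrightarrow> (blk_op N nd W ^^ t) (indicator {(i, b)}) (j, a) = 0)
    \<longleftrightarrow> (\<forall>k. 0 < k \<and> k < (\<Sum>l<N. nd l) \<longrightarrow> path_sum N nd W k i j = 0\<^sub>m (nd j) (nd i))"
proof
  assume response: "\<forall>t a b. a < nd j \<longrightarrow> b < nd i \<longrightarrow> (blk_op N nd W ^^ t) (indicator {(i, b)}) (j, a) = 0"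
  show "\<forall>k. 0 < k \<and> k < (\<Sum>l<N. nd l) \<longrightarrow> path_sum N nd W k i j = 0\<^sub>m (nd j) (nd i)"
  proof (intro allI impI)
    fix k
    show "path_sum N nd W k i j = 0\<^sub>m (nd j) (nd i)"
    proof (rule eq_matI)
      fix a b
      assume "a < dim_row (0\<^sub>m (nd j) (nd i) :: real mat)" and "b < dim_col (0\<^sub>m (nd j) (nd i) :: real mat)"
      then show "path_sum N nd W k i j $$ (a, b) = 0\<^sub>m (nd j) (nd i) $$ (a, b)"
        using response path_sum_entry[OF W i j] by simp
    qed (simp_all add: path_sum_def)
  qed
next
  assume path_sums: "\<forall>k. 0 < k \<and> k < (\<Sum>l<N. nd l) \<longrightarrow> path_sum N nd W k i j = 0\<^sub>m (nd j) (nd i)"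
  show "\<forall>t a b. a < nd j \<longrightarrow> b < nd i \<longrightarrow> (blk_op N nd W ^^ t) (indicator {(i, b)}) (j, a) = 0"
  proof (intro allI impI)
    fix t a b
    assume a: "a < nd j" and b: "b < nd i"
    show "(blk_op N nd W ^^ t) (indicator {(i, b)}) (j, a) = 0"
    proof (rule funpow_blk_op_vanishes_Krylov)
      show "indicator {(i, b)} q = 0" if "q \<notin> blk_idx N nd" for q :: "nat \<times> nat"
        using that i b by (auto simp: blk_idx_def indicator_def)
    next
      fix k
      assume k: "k < (\<Sum>l<N. nd l)"
      show "(blk_op N nd W ^^ k) (indicator {(i, b)}) (j, a) = 0"
      proof (cases k)
        case 0
        with ji show ?thesis by simp
      next
        case (Suc k')
        with k path_sums a b have "path_sum N nd W k i j $$ (a, b) = 0"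
          by simp
        then show ?thesis
          using path_sum_entry[OF W i j a b] by simp
      qed
    qed
  qed
qed

theorem theorem1:
  fixes N :: nat and nd :: "nat \<Rightarrow> nat" and g :: "nat \<Rightarrow> real"
    and P :: "nat \<Rightarrow> real mat" and Pc :: "nat \<Rightarrow> nat \<Rightarrow> real mat" and r :: "nat \<Rightarrow> real vec"
    and i j :: nat
  assumes P_dim: "\<And>l. l < N \<Longrightarrow> P l \<in> carrier_mat (nd l) (nd l)"
    and P_sym: "\<And>l. l < N \<Longrightarrow> transpose_mat (P l) = P l"
    and Pc_dim: "\<And>l m. l < N \<Longrightarrow> m < N \<Longrightarrow> l \<noteq> m \<Longrightarrow> Pc l m \<in> carrier_mat (nd l) (nd m)"
    and r_dim: "\<And>l. l < N \<Longrightarrow> r l \<in> carrier_vec (nd l)"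
    and g_pos: "\<And>l. l < N \<Longrightarrow> g l > 0"
    and ij: "i < N" "j < N" "j \<noteq> i"
  shows "dist_decoupled N nd g (Wblk nd g P Pc) r i j \<longleftrightarrow>
    (\<forall>k::nat. 0 < k \<and> k < (\<Sum>l<N. nd l) \<longrightarrow>
        path_sum N nd (Wblk nd g P Pc) k i j = 0\<^sub>m (nd j) (nd i))"
proof -
  have "Wblk nd g P Pc l m \<in> carrier_mat (nd l) (nd m)" if "l < N" "m < N" for l m
    using that P_dim Pc_dim by (auto simp: Wblk_def intro!: minus_carrier_mat)
  then show ?thesis
    unfolding dist_decoupled_iff_impulse_response[where g = g, OF ij(1,2) g_pos[OF ij(1)]]
    by (rule impulse_response_vanishes_iff_path_sums[OF _ ij])
qed

end
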